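(* Let $d,n,k\ge 1$ be integers and let $\mathcal{L}_{\leq d}(n,k)$ be the set of lonesum $0$-$1$ matrices with $n$ rows and $k$ columns having no all-zero row and no all-zero column, in which at most $d$ columns are of the same type and at most $d$ rows are of the same type. Then $\mathcal{L}_{\leq d}(n,k)$ is non-empty if and only if $\lceil n/d\rceil\leq k\leq nd$; i.e. $|\mathcal{L}_{\leq d}(n,k)|=0$ if $k<\lceil n/d\rceil$ or $k>nd$.
   Context: A $0$-$1$ matrix is lonesum if it is uniquely determined by its row sum vector and column sum vector; equivalently, it contains no $2\times 2$ submatrix equal to $\begin{pmatrix}1&0\\0&1\end{pmatrix}$ or $\begin{pmatrix}0&1\\1&0\end{pmatrix}$. Two rows (resp. columns) are of the same type iff they are identical vectors. *)

theory Defs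
  imports Complex_Main
begin

text \<open>An n x k 0-1 matrix is represented as a function M :: nat => nat => nat,
  with rows indexed by {0..<n}, columns by {0..<k}; entries outside the index
  range are required to be 0 (so that matrices are canonically represented).\<close>

definition binmat :: "nat \<Rightarrow> nat \<Rightarrow> (nat \<Rightarrow> nat \<Rightarrow> nat) \<Rightarrow> bool" where
  "binmat n k M \<longleftrightarrow> (\<forall>i j. M i j \<in> {0, 1}) \<and>
     (\<forall>i j. \<not> (i < n \<and> j < k) \<longrightarrow> M i j = 0)"

definition row_sum :: "nat \<Rightarrow> (nat \<Rightarrow> nat \<Rightarrow> nat) \<Rightarrow> nat \<Rightarrow> nat" where
  "row_sum k M i = (\<Sum>j<k. M i j)"

definition col_sum :: "nat \<Rightarrow> (nat \<Rightarrow> nat \<Rightarrow> nat) \<Rightarrow> nat \<Rightarrow> nat" where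
  "col_sum n M j = (\<Sum>i<n. M i j)"

definition lonesum :: "nat \<Rightarrow> nat \<Rightarrow> (nat \<Rightarrow> nat \<Rightarrow> nat) \<Rightarrow> bool" where
  "lonesum n k M \<longleftrightarrow> binmat n k M \<and>
     (\<forall>M'. binmat n k M' \<and> (\<forall>i<n. row_sum k M' i = row_sum k M i)
            \<and> (\<forall>j<k. col_sum n M' j = col_sum n M j) \<longrightarrow> M' = M)"

definition L_le :: "nat \<Rightarrow> nat \<Rightarrow> nat \<Rightarrow> (nat \<Rightarrow> nat \<Rightarrow> nat) set" where
  "L_le d n k = {M. lonesum n k M
     \<and> (\<forall>i<n. \<exists>j<k. M i j \<noteq> 0)
     \<and> (\<forall>j<k. \<exists>i<n. M i j \<noteq> 0)
     \<and> (\<forall>j<k. card {j'. j' < k \<and> (\<forall>i<n. M i j' = M i j)} \<le> d)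
     \<and> (\<forall>i<n. card {i'. i' < n \<and> (\<forall>j<k. M i' j = M i j)} \<le> d)}"

end

theory Submission
  imports Defs
begin

text \<open>Necessity. In a lonesum matrix any two rows are comparable entrywise, since otherwise
  they contain a switch, and exchanging its ones and zeros preserves all line sums. Hence rows
  with equal sums coincide, so the at most \<open>k\<close> possible sums of nonzero rows bound the
  number of row types, and \<open>n \<le> k d\<close>; transposing gives \<open>k \<le> n d\<close>.
  Sufficiency. For \<open>k \<le> n \<le> k d\<close> the staircase matrix whose row \<open>i\<close> consists of
  \<open>i mod k + 1\<close> leading ones is a Ferrers matrix, hence lonesum; its columns are pairwise
  distinct and each row type occurs at most \<open>d\<close> times. The case \<open>n < k\<close> follows by
  transposition.\<close>

lemma binmat_01:
  assumes "binmat n k M"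
  shows "M i j = 0 \<or> M i j = 1"
  using assms unfolding binmat_def by auto

lemma lonesum_imp_binmat: "lonesum n k M \<Longrightarrow> binmat n k M"
  unfolding lonesum_def by simp

lemma sum_eq_if_eq_off_two:
  fixes f g :: "'a \<Rightarrow> 'b :: comm_monoid_add"
  assumes "finite A" "x \<in> A" "y \<in> A" "x \<noteq> y" "f x + f y = g x + g y"
    and "\<And>z. z \<in> A \<Longrightarrow> z \<noteq> x \<Longrightarrow> z \<noteq> y \<Longrightarrow> f z = g z"
  shows "sum f A = sum g A"
proof -
  have rest: "sum f (A - {x} - {y}) = sum g (A - {x} - {y})"
    using assms(6) by (intro sum.cong) auto
  have "sum f A = f x + f y + sum f (A - {x} - {y})"
    using assms(1-4) by (simp add: sum.remove[of A x] sum.remove[of "A - {x}" y] add.assoc)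
  also have "\<dots> = g x + g y + sum g (A - {x} - {y})"
    using assms(5) rest by simp
  also have "\<dots> = sum g A"
    using assms(1-4) by (simp add: sum.remove[of A x] sum.remove[of "A - {x}" y] add.assoc)
  finally show ?thesis .
qed

lemma lonesum_no_switch:
  assumes L: "lonesum n k M" and i: "i < n" "i' < n" and j: "j1 < k" "j2 < k"
    and v: "M i j1 = 1" "M i' j1 = 0" "M i j2 = 0" "M i' j2 = 1"
  shows False
proof -
  have ii: "i \<noteq> i'" and jj: "j1 \<noteq> j2" using v by auto
  have bM: "binmat n k M" using L by (rule lonesum_imp_binmat)
  define M' where "M' a b = (if (a = i \<and> b = j1) \<or> (a = i' \<and> b = j2) then 0
     else if (a = i \<and> b = j2) \<or> (a = i' \<and> b = j1) then 1 else M a b)" for a b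
  have bM': "binmat n k M'" using bM i j unfolding binmat_def M'_def by auto
  have rows: "row_sum k M' a = row_sum k M a" if "a < n" for a
  proof (cases "a = i \<or> a = i'")
    case True
    then show ?thesis unfolding row_sum_def
      using ii jj v j by (intro sum_eq_if_eq_off_two[of "{..<k}" j1 j2]) (auto simp: M'_def)
  qed (simp add: row_sum_def M'_def)
  have cols: "col_sum n M' b = col_sum n M b" if "b < k" for b
  proof (cases "b = j1 \<or> b = j2")
    case True
    then show ?thesis unfolding col_sum_def
      using ii jj v i by (intro sum_eq_if_eq_off_two[of "{..<n}" i i']) (auto simp: M'_def)
  qed (simp add: col_sum_def M'_def)
  have "M' = M" using L bM' rows cols unfolding lonesum_def by blast
  moreover have "M' i j1 \<noteq> M i j1" using v unfolding M'_def by simp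
  ultimately show False by simp
qed

lemma lonesum_rows_comparable:
  assumes L: "lonesum n k M" and i: "i < n" "i' < n"
  shows "(\<forall>j<k. M i j \<le> M i' j) \<or> (\<forall>j<k. M i' j \<le> M i j)"
proof (rule ccontr)
  assume "\<not> ?thesis"
  then obtain j1 j2 where j: "j1 < k" "M i' j1 < M i j1" "j2 < k" "M i j2 < M i' j2"
    by (auto simp: not_le)
  have bM: "binmat n k M" using L by (rule lonesum_imp_binmat)
  have "M i j1 = 1" "M i' j1 = 0" "M i j2 = 0" "M i' j2 = 1"
    using j binmat_01[OF bM, of i j1] binmat_01[OF bM, of i' j1]
      binmat_01[OF bM, of i j2] binmat_01[OF bM, of i' j2] by auto
  then show False using lonesum_no_switch[OF L i j(1,3)] by blast
qed

lemma lonesum_rows_eq_if_row_sum_eq: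
  assumes L: "lonesum n k M" and i: "i < n" "i' < n"
    and s: "row_sum k M i = row_sum k M i'" and j: "j < k"
  shows "M i j = M i' j"
  using lonesum_rows_comparable[OF L i] s j sum_mono_inv[of "M i" "{..<k}" "M i'" j]
    sum_mono_inv[of "M i'" "{..<k}" "M i" j]
  unfolding row_sum_def by (auto simp: eq_commute)

lemma row_sum_nonzero_row:
  assumes "binmat n k M" and "j < k" "M i j \<noteq> 0"
  shows "row_sum k M i \<in> {1..k}"
proof -
  have "M i j \<le> row_sum k M i"
    unfolding row_sum_def using assms(2) by (intro member_le_sum) auto
  moreover have "row_sum k M i \<le> (\<Sum>b<k. 1)"
    unfolding row_sum_def using binmat_01[OF assms(1)] by (intro sum_mono) (metis le_refl zero_le)
  ultimately show ?thesis using assms(3) by auto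
qed

lemma lonesum_rows_le:
  assumes L: "lonesum n k M" and nonzero: "\<forall>i<n. \<exists>j<k. M i j \<noteq> 0"
    and types: "\<forall>i<n. card {i'. i' < n \<and> (\<forall>j<k. M i' j = M i j)} \<le> d"
  shows "n \<le> k * d"
proof -
  have bM: "binmat n k M" using L by (rule lonesum_imp_binmat)
  define S where "S s = {i. i < n \<and> row_sum k M i = s}" for s
  have cover: "{..<n} \<subseteq> (\<Union>s\<in>{1..k}. S s)"
    using nonzero row_sum_nonzero_row[OF bM] unfolding S_def by blast
  have card_S: "card (S s) \<le> d" for s
  proof (cases "S s = {}")
    case False
    then obtain i0 where i0: "i0 < n" "row_sum k M i0 = s" unfolding S_def by blast
    have "S s \<subseteq> {i'. i' < n \<and> (\<forall>j<k. M i' j = M i0 j)}"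
      using lonesum_rows_eq_if_row_sum_eq[OF L _ i0(1)] i0(2) unfolding S_def by auto
    then have "card (S s) \<le> card {i'. i' < n \<and> (\<forall>j<k. M i' j = M i0 j)}"
      by (intro card_mono) auto
    also have "\<dots> \<le> d" using types i0 by blast
    finally show ?thesis .
  qed simp
  have "n \<le> card (\<Union>s\<in>{1..k}. S s)"
    using card_mono[OF _ cover] unfolding S_def by simp
  also have "\<dots> \<le> (\<Sum>s\<in>{1..k}. card (S s))" by (rule card_UN_le) simp
  also have "\<dots> \<le> (\<Sum>s\<in>{1..k}. d)" using card_S by (intro sum_mono)
  finally show ?thesis by simp
qed

lemma lonesum_transpose:
  assumes L: "lonesum n k M"
  shows "lonesum k n (\<lambda>i j. M j i)"
  unfolding lonesum_def
proof (intro conjI allI impI)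
  show "binmat k n (\<lambda>i j. M j i)"
    using lonesum_imp_binmat[OF L] unfolding binmat_def by auto
  fix M' assume H: "binmat k n M' \<and> (\<forall>i<k. row_sum n M' i = row_sum n (\<lambda>i j. M j i) i)
     \<and> (\<forall>j<n. col_sum k M' j = col_sum k (\<lambda>i j. M j i) j)"
  have "binmat n k (\<lambda>a b. M' b a)" using H unfolding binmat_def by auto
  moreover have "\<forall>i<n. row_sum k (\<lambda>a b. M' b a) i = row_sum k M i"
    and "\<forall>j<k. col_sum n (\<lambda>a b. M' b a) j = col_sum n M j"
    using H unfolding row_sum_def col_sum_def by auto
  ultimately have "(\<lambda>a b. M' b a) = M" using L unfolding lonesum_def by blast
  then show "M' = (\<lambda>i j. M j i)" by auto
qed

lemma L_le_transpose:
  assumes "M \<in> L_le d n k"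
  shows "(\<lambda>i j. M j i) \<in> L_le d k n"
  using assms lonesum_transpose unfolding L_le_def by auto

lemma L_le_rows_le:
  assumes "M \<in> L_le d n k"
  shows "n \<le> k * d"
  using assms lonesum_rows_le unfolding L_le_def by blast

lemma double_sum_nonpos_eq_0:
  fixes f :: "'a \<Rightarrow> 'b \<Rightarrow> 'c :: ordered_ab_group_add"
  assumes "finite A" "finite B" and nonpos: "\<And>i j. i \<in> A \<Longrightarrow> j \<in> B \<Longrightarrow> f i j \<le> 0"
    and "(\<Sum>i\<in>A. \<Sum>j\<in>B. f i j) = 0" and "i \<in> A" "j \<in> B"
  shows "f i j = 0"
proof -
  have "(\<Sum>(i, j)\<in>A \<times> B. - f i j) = 0"
    using assms(4) by (simp add: sum.cartesian_product [symmetric] sum_negf)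
  then have "\<forall>(i, j)\<in>A \<times> B. - f i j = 0"
    using sum_nonneg_eq_0_iff[of "A \<times> B" "\<lambda>(i, j). - f i j"] assms(1,2) nonpos
    by auto
  then show ?thesis using assms(5,6) by auto
qed

text \<open>If \<open>M'\<close> has the line sums of the Ferrers matrix \<open>F\<close> with row lengths \<open>r i\<close>,
  weight the difference \<open>D = F - M'\<close> by \<open>2 j - 2 r i + 1\<close>. Every weighted entry is
  \<open>\<le> 0\<close>, with equality only where \<open>M'\<close> and \<open>F\<close> agree, while the total vanishes:
  the weight splits into a column part and a row part, and \<open>D\<close> has zero column and row sums.\<close>

lemma ferrers_lonesum:
  "lonesum n k (\<lambda>i j. if i < n \<and> j < k \<and> j < r i then 1 else 0)"
  (is "lonesum n k ?F")
  unfolding lonesum_def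
proof (intro conjI allI impI)
  show "binmat n k ?F" unfolding binmat_def by auto
  fix M' assume H: "binmat n k M' \<and> (\<forall>i<n. row_sum k M' i = row_sum k ?F i)
     \<and> (\<forall>j<k. col_sum n M' j = col_sum n ?F j)"
  then have bM: "binmat n k M'" by simp
  define D where "D i j = int (?F i j) - int (M' i j)" for i j
  define T where "T i j = D i j * (2 * int j - 2 * int (r i) + 1)" for i j
  have T_nonpos: "T i j \<le> 0" if "i < n" "j < k" for i j
    using binmat_01[OF bM, of i j] that unfolding T_def D_def by (cases "j < r i") auto
  have T_zero_imp: "M' i j = ?F i j" if "i < n" "j < k" "T i j = 0" for i j
    using binmat_01[OF bM, of i j] that unfolding T_def D_def by (cases "j < r i") auto
  have row_D: "(\<Sum>j<k. D i j) = 0" if "i < n" for i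
    using H that unfolding row_sum_def D_def
    by (simp add: sum_subtractf flip: of_nat_sum)
  have col_D: "(\<Sum>i<n. D i j) = 0" if "j < k" for j
    using H that unfolding col_sum_def D_def
    by (simp add: sum_subtractf flip: of_nat_sum)
  have T_split: "T i j = 2 * int j * D i j - (2 * int (r i) - 1) * D i j" for i j
    unfolding T_def by (simp add: algebra_simps)
  have "(\<Sum>i<n. \<Sum>j<k. T i j) = (\<Sum>i<n. \<Sum>j<k. 2 * int j * D i j)
     - (\<Sum>i<n. (2 * int (r i) - 1) * (\<Sum>j<k. D i j))"
    unfolding T_split by (simp add: sum_subtractf sum_distrib_left)
  also have "(\<Sum>i<n. \<Sum>j<k. 2 * int j * D i j) = (\<Sum>j<k. 2 * int j * (\<Sum>i<n. D i j))"
    by (subst sum.swap) (simp add: sum_distrib_left)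
  finally have total: "(\<Sum>i<n. \<Sum>j<k. T i j) = 0" using row_D col_D by simp
  have T_zero: "T i j = 0" if "i < n" "j < k" for i j
    using double_sum_nonpos_eq_0[of "{..<n}" "{..<k}" T] T_nonpos total that by simp
  show "M' = ?F"
  proof (intro ext)
    fix i j
    show "M' i j = ?F i j"
      using T_zero_imp[OF _ _ T_zero, of i j] bM unfolding binmat_def by (cases "i < n \<and> j < k") auto
  qed
qed

lemma card_residue_class_le:
  assumes "0 < k" "n \<le> k * d"
  shows "card {i'. i' < n \<and> i' mod k = a} \<le> d"
proof -
  have "card {i'. i' < n \<and> i' mod k = a} \<le> card {..<d}"
  proof (rule card_inj_on_le[where f = "\<lambda>x. x div k"])
    show "inj_on (\<lambda>x. x div k) {i'. i' < n \<and> i' mod k = a}"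
      by (intro inj_onI) (metis (mono_tags, lifting) div_mult_mod_eq mem_Collect_eq)
    show "(\<lambda>x. x div k) ` {i'. i' < n \<and> i' mod k = a} \<subseteq> {..<d}"
      using assms by (auto simp: less_mult_imp_div_less mult.commute)
  qed simp
  then show ?thesis by simp
qed

lemma staircase_in_L_le:
  assumes "1 \<le> k" "k \<le> n" "n \<le> k * d"
  shows "(\<lambda>i j. if i < n \<and> j < k \<and> j < Suc (i mod k) then 1 else 0) \<in> L_le d n k"
    (is "?F \<in> _")
proof -
  have "d \<ge> 1" using assms by (cases d) auto
  have col_types: "card {j'. j' < k \<and> (\<forall>i<n. ?F i j' = ?F i j)} \<le> d" if "j < k" for j
  proof -
    have "j' = j" if "j' < k" "\<forall>i<n. ?F i j' = ?F i j" for j'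
      using that(2)[rule_format, of j] that(2)[rule_format, of j'] that(1) \<open>j < k\<close> assms(2)
      by (auto split: if_splits)
    then have "{j'. j' < k \<and> (\<forall>i<n. ?F i j' = ?F i j)} \<subseteq> {j}" by blast
    then have "card {j'. j' < k \<and> (\<forall>i<n. ?F i j' = ?F i j)} \<le> card {j}"
      by (intro card_mono) auto
    then show ?thesis using \<open>d \<ge> 1\<close> by simp
  qed
  have row_types: "card {i'. i' < n \<and> (\<forall>j<k. ?F i' j = ?F i j)} \<le> d" if "i < n" for i
  proof -
    have "{i'. i' < n \<and> (\<forall>j<k. ?F i' j = ?F i j)} \<subseteq> {i'. i' < n \<and> i' mod k = i mod k}"
    proof safe
      fix i' assume i': "i' < n" "\<forall>j<k. ?F i' j = ?F i j"
      have "i mod k < k" "i' mod k < k" using assms(1) by simp_all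
      then have "i mod k \<le> i' mod k" "i' mod k \<le> i mod k"
        using i'(2)[rule_format, of "i mod k"] i'(2)[rule_format, of "i' mod k"] i'(1) that
        by (simp_all split: if_splits)
      then show "i' mod k = i mod k" by simp
    qed
    then have "card {i'. i' < n \<and> (\<forall>j<k. ?F i' j = ?F i j)}
        \<le> card {i'. i' < n \<and> i' mod k = i mod k}"
      by (intro card_mono) auto
    also have "\<dots> \<le> d" using card_residue_class_le assms by simp
    finally show ?thesis .
  qed
  have "\<forall>i<n. \<exists>j<k. ?F i j \<noteq> 0" using assms(1) by (auto intro: exI[of _ 0])
  moreover have "\<exists>i<n. ?F i j \<noteq> 0" if "j < k" for j
    using that assms(2) by (intro exI[of _ j]) simp
  ultimately show ?thesis
    unfolding L_le_def using ferrers_lonesum col_types row_types by simp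
qed

theorem mainTheorem5:
  fixes d n k :: nat
  assumes "d \<ge> 1" and "n \<ge> 1" and "k \<ge> 1"
  shows "L_le d n k \<noteq> {} \<longleftrightarrow> \<lceil>real n / real d\<rceil> \<le> int k \<and> k \<le> n * d"
proof -
  have "\<lceil>real n / real d\<rceil> \<le> int k \<longleftrightarrow> real n \<le> real k * real d"
    using assms(1) by (simp add: ceiling_le_iff pos_divide_le_eq)
  then have ceiling_iff: "\<lceil>real n / real d\<rceil> \<le> int k \<longleftrightarrow> n \<le> k * d"
    by (metis of_nat_le_iff of_nat_mult)
  have "L_le d n k \<noteq> {}" if "n \<le> k * d" "k \<le> n * d"
  proof (cases "k \<le> n")
    case True
    then show ?thesis using staircase_in_L_le assms that by blast
  next
    case False
    then have "(\<lambda>i j. if i < k \<and> j < n \<and> j < Suc (i mod n) then 1 else 0) \<in> L_le d k n"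
      using staircase_in_L_le[of n k d] assms that by simp
    then show ?thesis using L_le_transpose by blast
  qed
  moreover have "n \<le> k * d \<and> k \<le> n * d" if "M \<in> L_le d n k" for M
    using L_le_rows_le[OF that] L_le_rows_le[OF L_le_transpose[OF that]] by simp
  ultimately show ?thesis using ceiling_iff by blast
qed

end
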